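(* Let $\mathscr{V}\subset \mathbb{R}_{\max}^n$ be a max-plus cone with full support and $\{ \mathscr{H}_r \}_{r\in \mathbb{N}}$ be a decreasing sequence of half-spaces such that $\mathscr{V}\subset \mathscr{H}_r$ for all $r \in \mathbb{N}$. Then there exists a half-space $\mathscr{H}$ such that $\mathscr{H}=\cap_{r\in \mathbb{N}} \mathscr{H}_r$.
   Context: $\mathbb{R}_{\max}=\mathbb{R}\cup\{-\infty\}$ with $a\oplus b=\max(a,b)$ and $ab=a+b$; the zero element is $-\infty$. A max-plus cone is a subset $\mathscr{V}\subset\mathbb{R}_{\max}^n$ with $\lambda u\oplus\mu v\in\mathscr{V}$ for all $u,v\in\mathscr{V}$, $\lambda,\mu\in\mathbb{R}_{\max}$. A half-space is a set $\{x\in\mathbb{R}_{\max}^n : \max_i(a_i+x_i)\le \max_j(b_j+x_j)\}$ with $a,b\in\mathbb{R}_{\max}^n$. The support of $v$ is $\{k : v_k\neq-\infty\}$, the support of $\mathscr{V}$ is the union of supports of its elements, and $\mathscr{V}$ has full support if its support is $\{1,\dots,n\}$. *)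

theory Defs
  imports "HOL-Library.Extended_Real"
begin

text \<open>Max-plus semiring R_max = R \<union> {-\<infinity>}, modelled inside ereal as the elements
  different from +\<infinity>. Tropical sum is max, tropical product is +, zero is -\<infinity>.\<close>

definition rmax_vec :: "('n \<Rightarrow> ereal) \<Rightarrow> bool" where
  "rmax_vec x \<longleftrightarrow> (\<forall>i. x i \<noteq> \<infinity>)"

definition maxplus_cone :: "('n \<Rightarrow> ereal) set \<Rightarrow> bool" where
  "maxplus_cone V \<longleftrightarrow> (\<forall>v\<in>V. rmax_vec v) \<and>
     (\<forall>u\<in>V. \<forall>v\<in>V. \<forall>l m. l \<noteq> \<infinity> \<longrightarrow> m \<noteq> \<infinity> \<longrightarrow>
        (\<lambda>i. max (l + u i) (m + v i)) \<in> V)"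

definition halfspace :: "('n::finite \<Rightarrow> ereal) set \<Rightarrow> bool" where
  "halfspace H \<longleftrightarrow> (\<exists>a b. rmax_vec a \<and> rmax_vec b \<and>
     H = {x. rmax_vec x \<and> Max (range (\<lambda>i. a i + x i)) \<le> Max (range (\<lambda>j. b j + x j))})"

definition support_vec :: "('n \<Rightarrow> ereal) \<Rightarrow> 'n set" where
  "support_vec v = {k. v k \<noteq> -\<infinity>}"

definition support_set :: "('n \<Rightarrow> ereal) set \<Rightarrow> 'n set" where
  "support_set V = (\<Union>v\<in>V. support_vec v)"

definition full_support :: "('n \<Rightarrow> ereal) set \<Rightarrow> bool" where
  "full_support V \<longleftrightarrow> support_set V = UNIV"

end

theory Submission
  imports Defs "HOL-Analysis.Extended_Real_Limits"
begin

text \<open>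
  Fix a vector v of the cone with finite entries (it exists by full support). Every half-space
  containing v can be written as max_i (a_i + x_i) \<le> max_j (b_j + x_j) with a and b of disjoint
  support and max_j (b_j + v_j) = 0; this keeps all coefficients below +\<infinity> and the right-hand
  side non-trivial, and the normalisation survives limits. A subsequence of the coefficients of
  H_r converges (ereal vectors are sequentially compact) to the coefficients of a half-space L.
  Passing to the limit in the inequalities gives \<Inter>r. H_r \<subseteq> L. Conversely, a point satisfying
  the inequality of L strictly satisfies those of H_r for all large r, hence lies in every H_r
  since the sequence decreases; every point of L is a limit of such points, and each H_r is
  closed under these limits.
\<close>

lemma finite_UNIV_argmaxE:
  fixes f :: "'n::finite \<Rightarrow> 'a::linorder"
  obtains j where "\<And>k. f k \<le> f j"
proof -
  have "Max (range f) \<in> range f" by (rule Max_in) auto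
  then obtain j where "Max (range f) = f j" by blast
  then show thesis using that by (metis Max_ge finite UNIV_I finite_imageI image_eqI)
qed

lemma Max_range_le_Max_range_iff:
  fixes f g :: "'n::finite \<Rightarrow> 'a::linorder"
  shows "Max (range f) \<le> Max (range g) \<longleftrightarrow> (\<forall>i. \<exists>j. f i \<le> g j)"
proof -
  have "Max (range f) \<le> Max (range g) \<longleftrightarrow> (\<forall>i. f i \<le> Max (range g))"
    by (subst Max_le_iff) auto
  also have "\<dots> \<longleftrightarrow> (\<forall>i. \<exists>j. f i \<le> g j)" by (simp add: Max_ge_iff)
  finally show ?thesis .
qed

lemma Max_range_less_Max_range_iff:
  fixes f g :: "'n::finite \<Rightarrow> 'a::linorder"
  shows "Max (range f) < Max (range g) \<longleftrightarrow> (\<exists>j. \<forall>i. f i < g j)"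
proof -
  have "Max (range f) < Max (range g) \<longleftrightarrow> (\<exists>j. Max (range f) < g j)"
    by (subst Max_gr_iff) auto
  also have "\<dots> \<longleftrightarrow> (\<exists>j. \<forall>i. f i < g j)" by simp
  finally show ?thesis .
qed

lemma Max_range_eq_0_iff:
  fixes f :: "'n::finite \<Rightarrow> 'a::{linorder,zero}"
  shows "Max (range f) = 0 \<longleftrightarrow> (\<forall>j. f j \<le> 0) \<and> (\<exists>j. f j = 0)"
proof
  assume max0: "Max (range f) = 0"
  have "Max (range f) \<in> range f" by (rule Max_in) auto
  moreover have "f j \<le> Max (range f)" for j by (rule Max_ge) auto
  ultimately show "(\<forall>j. f j \<le> 0) \<and> (\<exists>j. f j = 0)" unfolding max0 by auto
next
  assume "(\<forall>j. f j \<le> 0) \<and> (\<exists>j. f j = 0)"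
  then show "Max (range f) = 0" by (intro Max_eqI) auto
qed

definition maxplus_hs :: "('n::finite \<Rightarrow> ereal) \<Rightarrow> ('n \<Rightarrow> ereal) \<Rightarrow> ('n \<Rightarrow> ereal) set" where
  "maxplus_hs a b =
     {x. rmax_vec x \<and> Max (range (\<lambda>i. a i + x i)) \<le> Max (range (\<lambda>j. b j + x j))}"

definition maxplus_hs_strict :: "('n::finite \<Rightarrow> ereal) \<Rightarrow> ('n \<Rightarrow> ereal) \<Rightarrow> ('n \<Rightarrow> ereal) set" where
  "maxplus_hs_strict a b =
     {x. rmax_vec x \<and> Max (range (\<lambda>i. a i + x i)) < Max (range (\<lambda>j. b j + x j))}"

lemma halfspace_iff_maxplus_hs:
  "halfspace H \<longleftrightarrow> (\<exists>a b. rmax_vec a \<and> rmax_vec b \<and> H = maxplus_hs a b)"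
  unfolding halfspace_def maxplus_hs_def ..

lemma mem_maxplus_hs_iff:
  "x \<in> maxplus_hs a b \<longleftrightarrow> rmax_vec x \<and> (\<forall>i. \<exists>j. a i + x i \<le> b j + x j)"
  unfolding maxplus_hs_def mem_Collect_eq Max_range_le_Max_range_iff ..

lemma mem_maxplus_hs_strict_iff:
  "x \<in> maxplus_hs_strict a b \<longleftrightarrow> rmax_vec x \<and> (\<exists>j. \<forall>i. a i + x i < b j + x j)"
  unfolding maxplus_hs_strict_def mem_Collect_eq Max_range_less_Max_range_iff ..

lemma ereal_add_max: "c + max p q = max (c + p) (c + q)" for c p q :: ereal
  by (simp add: max_def add_left_mono antisym)

lemma maxplus_cone_maxplus_hs: "maxplus_cone (maxplus_hs a b)"
  unfolding maxplus_cone_def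
proof (intro conjI ballI allI impI)
  show "rmax_vec x" if "x \<in> maxplus_hs a b" for x
    using that by (simp add: mem_maxplus_hs_iff)
next
  fix x y and l m :: ereal assume x: "x \<in> maxplus_hs a b" and y: "y \<in> maxplus_hs a b"
    and l: "l \<noteq> \<infinity>" and m: "m \<noteq> \<infinity>"
  define z where "z i = max (l + x i) (m + y i)" for i
  have "rmax_vec z"
    using x y l m by (auto simp: mem_maxplus_hs_iff rmax_vec_def z_def max_def)
  moreover have "\<exists>j. a i + z i \<le> b j + z j" for i
  proof -
    obtain j where j: "a i + x i \<le> b j + x j" using x by (auto simp: mem_maxplus_hs_iff)
    obtain j' where j': "a i + y i \<le> b j' + y j'" using y by (auto simp: mem_maxplus_hs_iff)
    have "l + (a i + x i) \<le> b j + z j"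
      using add_left_mono[OF j, of l] add_left_mono[of "l + x j" "z j" "b j"]
      by (simp add: z_def ac_simps)
    moreover have "m + (a i + y i) \<le> b j' + z j'"
      using add_left_mono[OF j', of m] add_left_mono[of "m + y j'" "z j'" "b j'"]
      by (simp add: z_def ac_simps)
    moreover have "a i + z i = max (l + (a i + x i)) (m + (a i + y i))"
      by (simp add: z_def ereal_add_max ac_simps)
    ultimately have "a i + z i \<le> max (b j + z j) (b j' + z j')"
      by (simp only: max.mono)
    then show ?thesis by (metis max_def)
  qed
  ultimately show "z \<in> maxplus_hs a b" by (simp add: mem_maxplus_hs_iff)
qed

lemma maxplus_hs_disjoint_supports:
  assumes rb: "rmax_vec b"
  shows "maxplus_hs a b =
    maxplus_hs (\<lambda>i. if b i < a i then a i else -\<infinity>) (\<lambda>i. if b i < a i then -\<infinity> else b i)"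
    (is "_ = maxplus_hs ?a ?b")
proof (intro equalityI subsetI)
  fix x assume x: "x \<in> maxplus_hs ?a ?b"
  have "\<exists>j. a i + x i \<le> b j + x j" for i
  proof (cases "b i < a i")
    case True
    obtain j where "?a i + x i \<le> ?b j + x j" using x by (auto simp: mem_maxplus_hs_iff)
    with True have "a i + x i \<le> ?b j + x j" by simp
    moreover have "?b j + x j \<le> b j + x j" by (simp add: add_right_mono)
    ultimately show ?thesis by (blast intro: order_trans)
  next
    case False
    then show ?thesis by (intro exI[of _ i]) (simp add: add_right_mono)
  qed
  then show "x \<in> maxplus_hs a b" using x by (simp add: mem_maxplus_hs_iff)
next
  fix x assume x: "x \<in> maxplus_hs a b"
  then have rx: "rmax_vec x" and ex: "\<And>i. \<exists>j. a i + x i \<le> b j + x j"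
    by (auto simp: mem_maxplus_hs_iff)
  obtain js where js: "\<And>j. b j + x j \<le> b js + x js"
    using finite_UNIV_argmaxE[of "\<lambda>j. b j + x j"] by blast
  have a_js: "a i + x i \<le> b js + x js" for i
    using ex[of i] js by (blast intro: order_trans)
  have "\<exists>j. ?a i + x i \<le> ?b j + x j" for i
  proof (cases "b js < a js")
    case False
    have "?a i + x i \<le> a i + x i" by (intro add_right_mono) simp
    with False show ?thesis using a_js[of i] by (intro exI[of _ js]) auto
  next
    case True
    have "x js = -\<infinity>"
    proof (rule ccontr)
      assume "x js \<noteq> -\<infinity>"
      then obtain r where "x js = ereal r" using rx by (cases "x js") (auto simp: rmax_vec_def)
      then have "b js + x js < a js + x js" using True by (cases "a js"; cases "b js") auto
      then show False using a_js[of js] by simp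
    qed
    then have "a i + x i = -\<infinity>" using a_js[of i] rb by (cases "b js") (auto simp: rmax_vec_def)
    moreover have "?a i + x i \<le> a i + x i" by (intro add_right_mono) simp
    ultimately have "?a i + x i \<le> -\<infinity>" by simp
    then show ?thesis by (intro exI[of _ js]) (rule order_trans, assumption, simp)
  qed
  then show "x \<in> maxplus_hs ?a ?b" using rx by (simp add: mem_maxplus_hs_iff)
qed

lemma maxplus_hs_shift: "maxplus_hs (\<lambda>i. a i + ereal c) (\<lambda>j. b j + ereal c) = maxplus_hs a b"
proof -
  have "(a i + ereal c) + x i \<le> (b j + ereal c) + x j \<longleftrightarrow> a i + x i \<le> b j + x j" for i j x
    by (cases "a i"; cases "b j"; cases "x i"; cases "x j") auto
  then show ?thesis by (simp add: mem_maxplus_hs_iff set_eq_iff)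
qed

lemma maxplus_hs_everything:
  assumes "\<And>i. a i = -\<infinity>"
  shows "maxplus_hs a b = {x. rmax_vec x}"
proof -
  have "-\<infinity> + x i \<le> y" if "rmax_vec x" for x :: "'a \<Rightarrow> ereal" and i y
    using that by (cases "x i") (auto simp: rmax_vec_def)
  then show ?thesis using assms by (auto simp: mem_maxplus_hs_iff)
qed

lemma maxplus_hs_right_trivial:
  assumes "\<And>j. b j = -\<infinity>" and "v \<in> maxplus_hs a b" and "\<And>i. v i \<noteq> -\<infinity>"
  shows "maxplus_hs a b = {x. rmax_vec x}"
proof -
  have rv: "rmax_vec v" using assms(2) by (simp add: mem_maxplus_hs_iff)
  have "a i = -\<infinity>" for i
  proof -
    obtain j where "a i + v i \<le> b j + v j" using assms(2) by (auto simp: mem_maxplus_hs_iff)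
    moreover have "b j + v j = -\<infinity>" using assms(1)[of j] rv by (cases "v j") (auto simp: rmax_vec_def)
    ultimately have "a i + v i \<le> -\<infinity>" by simp
    then show ?thesis using assms(3)[of i] rv by (cases "a i"; cases "v i") (auto simp: rmax_vec_def)
  qed
  then show ?thesis by (rule maxplus_hs_everything)
qed

definition normalized_coeffs :: "('n \<Rightarrow> ereal) \<Rightarrow> ('n \<Rightarrow> ereal) \<Rightarrow> ('n \<Rightarrow> ereal) \<Rightarrow> bool" where
  "normalized_coeffs v a b \<longleftrightarrow> rmax_vec a \<and> rmax_vec b \<and> (\<forall>i. a i = -\<infinity> \<or> b i = -\<infinity>) \<and>
     (\<forall>j. b j + v j \<le> 0) \<and> (\<exists>j. b j + v j = 0)"

lemma halfspace_normal_form: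
  fixes H :: "('n::finite \<Rightarrow> ereal) set"
  assumes "halfspace H" and vH: "v \<in> H" and v_fin: "\<And>i. v i \<noteq> -\<infinity>"
  obtains \<alpha> \<beta> where "normalized_coeffs v \<alpha> \<beta>" "H = maxplus_hs \<alpha> \<beta>"
proof -
  obtain a b where ra: "rmax_vec a" and rb: "rmax_vec b" and H: "H = maxplus_hs a b"
    using assms(1) by (auto simp: halfspace_iff_maxplus_hs)
  define a' where "a' i = (if b i < a i then a i else -\<infinity>)" for i
  define b' where "b' i = (if b i < a i then -\<infinity> else b i)" for i
  have H': "H = maxplus_hs a' b'"
    using H maxplus_hs_disjoint_supports[OF rb] unfolding a'_def b'_def by simp
  have ra': "rmax_vec a'" and rb': "rmax_vec b'" and disj: "\<And>i. a' i = -\<infinity> \<or> b' i = -\<infinity>"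
    using ra rb by (auto simp: rmax_vec_def a'_def b'_def)
  have v_rmax: "rmax_vec v" using vH H' by (simp add: mem_maxplus_hs_iff)
  obtain j0 where j0: "\<And>j. b' j + v j \<le> b' j0 + v j0"
    using finite_UNIV_argmaxE[of "\<lambda>j. b' j + v j"] by blast
  show thesis
  proof (cases "b' j0 = -\<infinity>")
    case True
    then have "b' j0 + v j0 = -\<infinity>" using v_rmax by (cases "v j0") (auto simp: rmax_vec_def)
    then have b'_v: "b' j + v j \<le> -\<infinity>" for j using j0[of j] by (simp only:)
    have "b' j = -\<infinity>" for j
      using b'_v[of j] v_fin[of j] v_rmax by (cases "b' j"; cases "v j") (auto simp: rmax_vec_def)
    then have "H = {x. rmax_vec x}"
      using vH v_fin unfolding H' by (rule maxplus_hs_right_trivial)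
    moreover have "maxplus_hs (\<lambda>_. -\<infinity>) (\<lambda>j. - v j) = {x. rmax_vec x}"
      by (rule maxplus_hs_everything) simp
    ultimately have "H = maxplus_hs (\<lambda>_. -\<infinity>) (\<lambda>j. - v j)" by simp
    moreover have "- v j + v j = 0" for j
      using v_fin[of j] v_rmax by (cases "v j") (auto simp: rmax_vec_def)
    moreover have "rmax_vec (\<lambda>j. - v j)" using v_fin by (simp add: rmax_vec_def ereal_uminus_eq_reorder)
    ultimately show thesis
      using that[of "\<lambda>_. -\<infinity>" "\<lambda>j. - v j"] by (simp add: normalized_coeffs_def rmax_vec_def)
  next
    case False
    then obtain c where c: "b' j0 + v j0 = ereal c"
      using rb' v_rmax v_fin[of j0] by (cases "b' j0"; cases "v j0") (auto simp: rmax_vec_def)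
    define \<alpha> where "\<alpha> i = a' i + ereal (- c)" for i
    define \<beta> where "\<beta> j = b' j + ereal (- c)" for j
    have "H = maxplus_hs \<alpha> \<beta>" unfolding \<alpha>_def \<beta>_def H' maxplus_hs_shift ..
    moreover have \<beta>_v: "\<beta> j + v j = (b' j + v j) + ereal (- c)" for j
      by (simp add: \<beta>_def ac_simps)
    moreover have "\<beta> j + v j \<le> 0" for j
    proof -
      have "p \<le> ereal c \<Longrightarrow> p + ereal (- c) \<le> 0" for p by (cases p) auto
      then show ?thesis using j0[of j] unfolding c \<beta>_v .
    qed
    moreover have "\<beta> j0 + v j0 = 0" unfolding \<beta>_v c by simp
    moreover have "rmax_vec \<alpha>" "rmax_vec \<beta>"
      using ra' rb' by (auto simp: rmax_vec_def \<alpha>_def \<beta>_def)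
    moreover have "\<alpha> i = -\<infinity> \<or> \<beta> i = -\<infinity>" for i
      using disj[of i] by (auto simp: \<alpha>_def \<beta>_def)
    ultimately show thesis using that unfolding normalized_coeffs_def by blast
  qed
qed

lemma tendsto_Max_image:
  fixes f :: "nat \<Rightarrow> 'i \<Rightarrow> 'a::linorder_topology"
  assumes "finite A" "A \<noteq> {}" "\<And>i. i \<in> A \<Longrightarrow> (\<lambda>k. f k i) \<longlonglongrightarrow> l i"
  shows "(\<lambda>k. Max (f k ` A)) \<longlonglongrightarrow> Max (l ` A)"
  using assms
proof (induction A rule: finite_ne_induct)
  case (insert x F)
  then show ?case by (auto simp: Max_insert intro!: tendsto_max)
qed simp

lemma tendsto_Max_range_plus:
  fixes a x :: "nat \<Rightarrow> 'n::finite \<Rightarrow> ereal"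
  assumes "\<And>i. (\<lambda>k. a k i) \<longlonglongrightarrow> a' i" "\<And>i. (\<lambda>k. x k i) \<longlonglongrightarrow> y i"
    and "rmax_vec a'" "rmax_vec y"
  shows "(\<lambda>k. Max (range (\<lambda>i. a k i + x k i))) \<longlonglongrightarrow> Max (range (\<lambda>i. a' i + y i))"
  using assms
  by (intro tendsto_Max_image tendsto_add_ereal_general) (auto simp: rmax_vec_def)

lemma maxplus_hs_limit:
  fixes a b x :: "nat \<Rightarrow> 'n::finite \<Rightarrow> ereal"
  assumes "\<And>k. x k \<in> maxplus_hs (a k) (b k)"
    and "\<And>i. (\<lambda>k. a k i) \<longlonglongrightarrow> a' i" "\<And>j. (\<lambda>k. b k j) \<longlonglongrightarrow> b' j"
    and "\<And>i. (\<lambda>k. x k i) \<longlonglongrightarrow> y i"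
    and "rmax_vec a'" "rmax_vec b'" "rmax_vec y"
  shows "y \<in> maxplus_hs a' b'"
proof -
  have le: "Max (range (\<lambda>i. a k i + x k i)) \<le> Max (range (\<lambda>j. b k j + x k j))" for k
    using assms(1)[of k] unfolding maxplus_hs_def by blast
  have "Max (range (\<lambda>i. a' i + y i)) \<le> Max (range (\<lambda>j. b' j + y j))"
    by (rule LIMSEQ_le[OF tendsto_Max_range_plus[of a a' x y] tendsto_Max_range_plus[of b b' x y]])
      (use assms le in blast)+
  then show ?thesis using assms(7) by (simp add: maxplus_hs_def)
qed

lemma eventually_mem_maxplus_hs:
  fixes a b :: "nat \<Rightarrow> 'n::finite \<Rightarrow> ereal"
  assumes "\<And>i. (\<lambda>k. a k i) \<longlonglongrightarrow> a' i" "\<And>j. (\<lambda>k. b k j) \<longlonglongrightarrow> b' j"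
    and "rmax_vec a'" "rmax_vec b'" "y \<in> maxplus_hs_strict a' b'"
  shows "eventually (\<lambda>k. y \<in> maxplus_hs (a k) (b k)) sequentially"
proof -
  from assms(5) have y: "rmax_vec y"
    and lt: "Max (range (\<lambda>i. a' i + y i)) < Max (range (\<lambda>j. b' j + y j))"
    by (auto simp: maxplus_hs_strict_def)
  obtain c where c: "Max (range (\<lambda>i. a' i + y i)) < c" "c < Max (range (\<lambda>j. b' j + y j))"
    using dense[OF lt] by blast
  have "eventually (\<lambda>k. Max (range (\<lambda>i. a k i + y i)) < c) sequentially"
    by (rule order_tendstoD(2)[OF tendsto_Max_range_plus c(1)]) (use assms y in auto)
  moreover have "eventually (\<lambda>k. c < Max (range (\<lambda>j. b k j + y j))) sequentially"
    by (rule order_tendstoD(1)[OF tendsto_Max_range_plus c(2)]) (use assms y in auto)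
  ultimately have "eventually (\<lambda>k. Max (range (\<lambda>i. a k i + y i)) < Max (range (\<lambda>j. b k j + y j)))
      sequentially"
    by eventually_elim (rule less_trans)
  then show ?thesis
    by (rule eventually_mono) (auto simp only: maxplus_hs_def mem_Collect_eq y intro: less_imp_le)
qed

lemma ereal_vector_convergent_subseq:
  fixes f :: "nat \<Rightarrow> 'i::finite \<Rightarrow> ereal"
  obtains \<phi> l where "strict_mono \<phi>" "\<And>i. (\<lambda>k. f (\<phi> k) i) \<longlonglongrightarrow> l i"
proof -
  have "\<exists>\<phi> l. strict_mono \<phi> \<and> (\<forall>i\<in>A. (\<lambda>k. f (\<phi> k) i) \<longlonglongrightarrow> l i)" if "finite A" for A
    using that
  proof (induction A rule: finite_induct)
    case empty
    show ?case using strict_mono_id by blast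
  next
    case (insert a A)
    then obtain \<phi> l where \<phi>: "strict_mono \<phi>" and l: "\<forall>i\<in>A. (\<lambda>k. f (\<phi> k) i) \<longlonglongrightarrow> l i"
      by blast
    obtain c \<psi> where \<psi>: "strict_mono \<psi>" and c: "((\<lambda>k. f (\<phi> k) a) \<circ> \<psi>) \<longlonglongrightarrow> c"
      using compact_complete_linorder by blast
    have "(\<lambda>k. f ((\<phi> \<circ> \<psi>) k) i) \<longlonglongrightarrow> (l(a := c)) i" if "i \<in> insert a A" for i
    proof (cases "i = a")
      case False
      then have "((\<lambda>k. f (\<phi> k) i) \<circ> \<psi>) \<longlonglongrightarrow> l i"
        using that l \<psi> LIMSEQ_subseq_LIMSEQ by blast
      then show ?thesis using False by (simp add: o_def)
    qed (use c in \<open>simp add: o_def\<close>)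
    then show ?case using strict_mono_o[OF \<phi> \<psi>] by blast
  qed
  from this[of UNIV] show thesis using that by auto
qed

text \<open>By disjointness of the supports, lowering u on the support of a leaves the right-hand
  side unchanged.\<close>

lemma maxplus_hs_strict_lower_left_support:
  fixes a b u :: "'n::finite \<Rightarrow> ereal"
  assumes ra: "rmax_vec a" and rb: "rmax_vec b" and disj: "\<And>i. a i = -\<infinity> \<or> b i = -\<infinity>"
    and j0: "b j0 \<noteq> -\<infinity>" and u: "u \<in> maxplus_hs a b" and u_fin: "\<And>i. \<bar>u i\<bar> \<noteq> \<infinity>"
    and "0 < \<delta>"
  shows "(\<lambda>i. u i + (if a i = -\<infinity> then 0 else ereal (- \<delta>))) \<in> maxplus_hs_strict a b"
    (is "?y \<in> _")
proof -
  obtain jm where jm: "\<And>j. b j + u j \<le> b jm + u jm"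
    using finite_UNIV_argmaxE[of "\<lambda>j. b j + u j"] by blast
  obtain m where m: "b jm + u jm = ereal m"
  proof -
    have "b j0 + u j0 \<noteq> -\<infinity>" using j0 rb u_fin[of j0] by (auto simp: rmax_vec_def)
    then show thesis using that jm[of j0] rb u_fin[of jm] by (cases "b jm") (auto simp: rmax_vec_def)
  qed
  have b_y: "b j + ?y j = b j + u j" for j
    using disj[of j] u_fin[of j] by auto
  have "?y i \<noteq> \<infinity>" for i using u_fin[of i] by (cases "u i") auto
  then have "rmax_vec ?y" by (simp add: rmax_vec_def)
  moreover have "a i + ?y i < b jm + ?y jm" for i
  proof (cases "a i = -\<infinity>")
    case True
    then show ?thesis using u_fin[of i] m b_y[of jm] by auto
  next
    case False
    obtain j where "a i + u i \<le> b j + u j" using u by (auto simp: mem_maxplus_hs_iff)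
    then have "a i + u i \<le> ereal m" using jm[of j] m by simp
    then show ?thesis
      using False ra u_fin[of i] m b_y[of jm] \<open>0 < \<delta>\<close> by (cases "a i") (auto simp: rmax_vec_def)
  qed
  ultimately show ?thesis unfolding mem_maxplus_hs_strict_iff by blast
qed

lemma maxplus_hs_strict_dense:
  fixes a b v x :: "'n::finite \<Rightarrow> ereal"
  assumes nc: "normalized_coeffs v a b" and v: "v \<in> maxplus_hs a b" and v_fin: "\<And>i. v i \<noteq> -\<infinity>"
    and x: "x \<in> maxplus_hs a b"
  obtains y where "\<And>k. y k \<in> maxplus_hs_strict a b" "\<And>i. (\<lambda>k. y k i) \<longlonglongrightarrow> x i"
proof -
  have rx: "rmax_vec x" and rv: "rmax_vec v" using x v by (auto simp: mem_maxplus_hs_iff)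
  have ra: "rmax_vec a" and rb: "rmax_vec b" and disj: "\<And>i. a i = -\<infinity> \<or> b i = -\<infinity>"
    using nc by (auto simp: normalized_coeffs_def)
  obtain j0 where "b j0 + v j0 = 0" using nc by (auto simp: normalized_coeffs_def)
  then have j0: "b j0 \<noteq> -\<infinity>" using rv by (cases "v j0") (auto simp: rmax_vec_def)
  define u where "u k i = max (x i) (- ereal (real k) + v i)" for k i
  define y where "y k i = u k i + (if a i = -\<infinity> then 0 else ereal (- inverse (real (Suc k))))"
    for k i
  have u_mem: "u k \<in> maxplus_hs a b" for k
  proof -
    have "\<forall>l m. l \<noteq> \<infinity> \<longrightarrow> m \<noteq> \<infinity> \<longrightarrow> (\<lambda>i. max (l + x i) (m + v i)) \<in> maxplus_hs a b"
      using maxplus_cone_maxplus_hs[of a b] x v unfolding maxplus_cone_def by blast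
    from this[rule_format, of 0 "- ereal (real k)"] show ?thesis unfolding u_def by simp
  qed
  have u_fin: "\<bar>u k i\<bar> \<noteq> \<infinity>" for k i
    using rx rv v_fin[of i] by (cases "x i"; cases "v i") (auto simp: u_def rmax_vec_def max_def)
  have "y k \<in> maxplus_hs_strict a b" for k
    unfolding y_def by (rule maxplus_hs_strict_lower_left_support[OF ra rb disj j0 u_mem u_fin]) simp
  moreover have "(\<lambda>k. y k i) \<longlonglongrightarrow> x i" for i
  proof -
    have "(\<lambda>k. - ereal (real k) + v i) \<longlonglongrightarrow> -\<infinity> + v i"
      using rv by (intro tendsto_add_ereal_general tendsto_uminus_ereal id_nat_ereal_tendsto_PInf)
        (auto simp: rmax_vec_def)
    then have "(\<lambda>k. u k i) \<longlonglongrightarrow> max (x i) (-\<infinity> + v i)"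
      unfolding u_def by (intro tendsto_max tendsto_const)
    moreover have "-\<infinity> + v i = -\<infinity>" using rv by (cases "v i") (auto simp: rmax_vec_def)
    moreover have "(\<lambda>k. if a i = -\<infinity> then 0 else ereal (- inverse (real (Suc k)))) \<longlonglongrightarrow> 0"
    proof -
      have "(\<lambda>k. ereal (- inverse (real (Suc k)))) \<longlonglongrightarrow> ereal (- 0)"
        by (intro tendsto_ereal tendsto_minus LIMSEQ_inverse_real_of_nat)
      then show ?thesis by (cases "a i = -\<infinity>") (simp_all add: zero_ereal_def)
    qed
    ultimately have "(\<lambda>k. y k i) \<longlonglongrightarrow> x i + 0"
      unfolding y_def using rx by (intro tendsto_add_ereal_general) (auto simp: rmax_vec_def)
    then show ?thesis by simp
  qed
  ultimately show thesis using that by blast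
qed

lemma normalized_coeffs_limit:
  fixes a b :: "nat \<Rightarrow> 'n::finite \<Rightarrow> ereal"
  assumes nc: "\<And>k. normalized_coeffs v (a k) (b k)" and vH: "\<And>k. v \<in> maxplus_hs (a k) (b k)"
    and v_fin: "\<And>i. v i \<noteq> -\<infinity>"
    and a: "\<And>i. (\<lambda>k. a k i) \<longlonglongrightarrow> a' i" and b: "\<And>j. (\<lambda>k. b k j) \<longlonglongrightarrow> b' j"
  shows "normalized_coeffs v a' b'"
proof -
  have rv: "rmax_vec v" using vH[of 0] by (simp add: mem_maxplus_hs_iff)
  have plus_v: "(\<lambda>k. c k i + v i) \<longlonglongrightarrow> c' i + v i" if "\<And>i. (\<lambda>k. c k i) \<longlonglongrightarrow> c' i"
    for c :: "nat \<Rightarrow> 'n \<Rightarrow> ereal" and c' i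
    using that rv v_fin[of i] by (intro tendsto_add_ereal_general) (auto simp: rmax_vec_def)
  have b_v: "Max (range (\<lambda>j. b k j + v j)) = 0" for k
    using nc[of k] by (simp add: normalized_coeffs_def Max_range_eq_0_iff)
  have a_v: "a k i + v i \<le> 0" for k i
  proof -
    obtain j where "a k i + v i \<le> b k j + v j" using vH[of k] by (auto simp: mem_maxplus_hs_iff)
    moreover have "b k j + v j \<le> 0" using b_v[of k] by (simp add: Max_range_eq_0_iff)
    ultimately show ?thesis by (rule order_trans)
  qed
  have a'_v: "a' i + v i \<le> 0" for i
    using a_v by (intro LIMSEQ_le_const2[OF plus_v[OF a]]) auto
  have b'_v: "b' j + v j \<le> 0" for j
    using b_v by (intro LIMSEQ_le_const2[OF plus_v[OF b]]) (auto simp: Max_range_eq_0_iff)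
  have ra': "rmax_vec a'" and rb': "rmax_vec b'"
  proof -
    have "c \<noteq> \<infinity>" if "c + v i \<le> 0" for c i using that v_fin[of i] by auto
    then show "rmax_vec a'" "rmax_vec b'" using a'_v b'_v by (auto simp: rmax_vec_def)
  qed
  have "Max (range (\<lambda>j. b' j + v j)) = 0"
  proof (rule LIMSEQ_unique)
    show "(\<lambda>k. Max (range (\<lambda>j. b k j + v j))) \<longlonglongrightarrow> Max (range (\<lambda>j. b' j + v j))"
      using b rb' rv by (intro tendsto_Max_range_plus[where x = "\<lambda>_. v"]) auto
    show "(\<lambda>k. Max (range (\<lambda>j. b k j + v j))) \<longlonglongrightarrow> 0" unfolding b_v by simp
  qed
  then have b'_max: "\<exists>j. b' j + v j = 0" by (simp add: Max_range_eq_0_iff)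
  moreover have "a' i = -\<infinity> \<or> b' i = -\<infinity>" for i
  proof (rule ccontr)
    assume "\<not> ?thesis"
    then have "-\<infinity> < a' i" "-\<infinity> < b' i" by auto
    then have "eventually (\<lambda>k. -\<infinity> < a k i \<and> -\<infinity> < b k i) sequentially"
      by (intro eventually_conj order_tendstoD(1)[OF a] order_tendstoD(1)[OF b])
    then obtain k where "-\<infinity> < a k i" "-\<infinity> < b k i" by (auto simp: eventually_sequentially)
    then show False using nc[of k] by (auto simp: normalized_coeffs_def)
  qed
  then show ?thesis using ra' rb' b'_v b'_max by (simp add: normalized_coeffs_def)
qed

lemma Inter_decseq_eq_maxplus_hs:
  fixes H :: "nat \<Rightarrow> ('n::finite \<Rightarrow> ereal) set"
  assumes dec: "\<And>r. H (Suc r) \<subseteq> H r" and H: "\<And>r. H r = maxplus_hs (a r) (b r)"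
    and ra: "\<And>r. rmax_vec (a r)" and rb: "\<And>r. rmax_vec (b r)"
    and \<phi>: "strict_mono \<phi>"
    and a: "\<And>i. (\<lambda>k. a (\<phi> k) i) \<longlonglongrightarrow> a' i" and b: "\<And>j. (\<lambda>k. b (\<phi> k) j) \<longlonglongrightarrow> b' j"
    and nc: "normalized_coeffs v a' b'" and vH: "\<And>r. v \<in> H r" and v_fin: "\<And>i. v i \<noteq> -\<infinity>"
  shows "(\<Inter>r. H r) = maxplus_hs a' b'"
proof -
  have ra': "rmax_vec a'" and rb': "rmax_vec b'" using nc by (auto simp: normalized_coeffs_def)
  have Inter_sub: "(\<Inter>r. H r) \<subseteq> maxplus_hs a' b'"
  proof
    fix x assume "x \<in> (\<Inter>r. H r)"
    then have "x \<in> H (\<phi> k)" for k by blast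
    then have x_mem: "x \<in> maxplus_hs (a (\<phi> k)) (b (\<phi> k))" for k unfolding H .
    then have "rmax_vec x" by (simp add: mem_maxplus_hs_iff)
    with x_mem show "x \<in> maxplus_hs a' b'"
      using maxplus_hs_limit[where x = "\<lambda>_. x", OF _ a b tendsto_const ra' rb'] by blast
  qed
  have strict_sub: "y \<in> H r" if "y \<in> maxplus_hs_strict a' b'" for y r
  proof -
    have "eventually (\<lambda>k. y \<in> H (\<phi> k)) sequentially"
      unfolding H by (rule eventually_mem_maxplus_hs[OF a b ra' rb' that])
    then obtain N where "\<And>k. k \<ge> N \<Longrightarrow> y \<in> H (\<phi> k)" by (auto simp: eventually_sequentially)
    moreover have "H (\<phi> (max N r)) \<subseteq> H r"
      by (rule lift_Suc_antimono_le[of H, OF dec]) (use seq_suble[OF \<phi>, of "max N r"] in auto)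
    ultimately show ?thesis by (meson max.cobounded1 subsetD)
  qed
  have "x \<in> H r" if x: "x \<in> maxplus_hs a' b'" for x r
  proof -
    have "v \<in> maxplus_hs a' b'" using Inter_sub vH by blast
    then obtain y where y: "\<And>k. y k \<in> maxplus_hs_strict a' b'" and y_x: "\<And>i. (\<lambda>k. y k i) \<longlonglongrightarrow> x i"
      using maxplus_hs_strict_dense[OF nc _ v_fin x] by blast
    have "y k \<in> maxplus_hs (a r) (b r)" for k using strict_sub[OF y] H by simp
    moreover have "rmax_vec x" using x by (simp add: mem_maxplus_hs_iff)
    ultimately have "x \<in> maxplus_hs (a r) (b r)"
      using maxplus_hs_limit[where x = y and y = x and a = "\<lambda>_. a r" and b = "\<lambda>_. b r",
          OF _ tendsto_const tendsto_const y_x ra rb]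
      by blast
    then show ?thesis using H by simp
  qed
  then show ?thesis using Inter_sub by (intro equalityI) auto
qed

lemma halfspace_Inter_decseq:
  fixes H :: "nat \<Rightarrow> ('n::finite \<Rightarrow> ereal) set"
  assumes hs: "\<And>r. halfspace (H r)" and dec: "\<And>r. H (Suc r) \<subseteq> H r"
    and vH: "\<And>r. v \<in> H r" and v_fin: "\<And>i. v i \<noteq> -\<infinity>"
  shows "halfspace (\<Inter>r. H r)"
proof -
  have "\<exists>a b. normalized_coeffs v a b \<and> H r = maxplus_hs a b" for r
    using halfspace_normal_form[OF hs vH v_fin] by metis
  then obtain a b where nc: "\<And>r. normalized_coeffs v (a r) (b r)"
    and H: "\<And>r. H r = maxplus_hs (a r) (b r)"
    by metis
  obtain \<phi> l where \<phi>: "strict_mono \<phi>"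
    and l: "\<And>s. (\<lambda>k. case_sum (a (\<phi> k)) (b (\<phi> k)) s) \<longlonglongrightarrow> l s"
    using ereal_vector_convergent_subseq[of "\<lambda>k. case_sum (a k) (b k)"] by blast
  define a' where "a' i = l (Inl i)" for i
  define b' where "b' j = l (Inr j)" for j
  have a': "(\<lambda>k. a (\<phi> k) i) \<longlonglongrightarrow> a' i" for i using l[of "Inl i"] by (simp add: a'_def)
  have b': "(\<lambda>k. b (\<phi> k) j) \<longlonglongrightarrow> b' j" for j using l[of "Inr j"] by (simp add: b'_def)
  have nc': "normalized_coeffs v a' b'"
    using nc vH H by (intro normalized_coeffs_limit[OF _ _ v_fin a' b']) auto
  have "(\<Inter>r. H r) = maxplus_hs a' b'"
    using nc by (intro Inter_decseq_eq_maxplus_hs[OF dec H _ _ \<phi> a' b' nc' vH v_fin])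
      (auto simp: normalized_coeffs_def)
  then show ?thesis using nc' by (auto simp: halfspace_iff_maxplus_hs normalized_coeffs_def)
qed

lemma maxplus_cone_full_support_finite_vector:
  fixes V :: "('n::finite \<Rightarrow> ereal) set"
  assumes cone: "maxplus_cone V" and fs: "full_support V"
  obtains v where "v \<in> V" "\<And>i. v i \<noteq> -\<infinity>"
proof -
  have max_mem: "(\<lambda>i. max (u i) (w i)) \<in> V" if "u \<in> V" "w \<in> V" for u w
  proof -
    have "\<forall>l m. l \<noteq> \<infinity> \<longrightarrow> m \<noteq> \<infinity> \<longrightarrow> (\<lambda>i. max (l + u i) (m + w i)) \<in> V"
      using cone that unfolding maxplus_cone_def by blast
    from this[rule_format, of 0 0] show ?thesis by simp
  qed
  have "\<exists>v\<in>V. \<forall>i\<in>A. v i \<noteq> -\<infinity>" if "finite A" for A :: "'n set"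
    using that
  proof (induction A rule: finite_induct)
    case empty
    have "k \<in> support_set V" for k using fs by (simp add: full_support_def)
    then show ?case by (auto simp: support_set_def)
  next
    case (insert k A)
    then obtain v where v: "v \<in> V" "\<forall>i\<in>A. v i \<noteq> -\<infinity>" by blast
    have "k \<in> support_set V" using fs by (simp add: full_support_def)
    then obtain w where w: "w \<in> V" "w k \<noteq> -\<infinity>" by (auto simp: support_set_def support_vec_def)
    have "\<forall>i\<in>insert k A. max (v i) (w i) \<noteq> -\<infinity>" using v(2) w(2) by (auto simp: max_def)
    then show ?case using max_mem[OF v(1) w(1)] by (intro bexI[of _ "\<lambda>i. max (v i) (w i)"]) simp_all
  qed
  from this[of UNIV] show thesis using that by auto
qed

theorem lemma3p3:
  fixes V :: "('n::finite \<Rightarrow> ereal) set"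
    and H :: "nat \<Rightarrow> ('n \<Rightarrow> ereal) set"
  assumes "maxplus_cone V"
    and "full_support V"
    and "\<And>r. halfspace (H r)"
    and "\<And>r. H (Suc r) \<subseteq> H r"
    and "\<And>r. V \<subseteq> H r"
  shows "\<exists>H'. halfspace H' \<and> H' = (\<Inter>r. H r)"
proof -
  obtain v where v: "v \<in> V" and v_fin: "\<And>i. v i \<noteq> -\<infinity>"
    using maxplus_cone_full_support_finite_vector[OF assms(1,2)] by blast
  have "v \<in> H r" for r using assms(5) v by blast
  with assms(3,4) have "halfspace (\<Inter>r. H r)" using v_fin by (rule halfspace_Inter_decseq)
  then show ?thesis by blast
qed

end
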